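(* For every integer $n \geq 1$, the complete bipartite graphs $K_{2,n}$ and $K_{3,n}$ are stable, i.e., all roots of their independence polynomials lie in the closed left half-plane $\{z \in \mathbb{C} : \mathrm{Re}(z) \leq 0\}$.
   Context: For a simple graph $G$, the independence polynomial is $i(G,x)=\sum_{k=0}^{\alpha(G)} i_k(G)x^k$, where $i_k(G)$ is the number of independent sets of size $k$ in $G$ (with $i_0(G)=1$) and $\alpha(G)$ is the independence number. A graph $G$ is called stable if every root $z$ of $i(G,x)$ satisfies $\mathrm{Re}(z)\leq 0$. For the complete bipartite graph $K_{m,n}$ one has $i(K_{m,n},x)=(1+x)^n+(1+x)^m-1$. *)

theory Defs
  imports "HOL-Computational_Algebra.Polynomial" Complex_Main
begin

definition simple_graph :: "'a set \<Rightarrow> ('a \<Rightarrow> 'a \<Rightarrow> bool) \<Rightarrow> bool" where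
  "simple_graph V E \<longleftrightarrow> finite V \<and> (\<forall>x y. E x y \<longrightarrow> E y x) \<and>
     (\<forall>x. \<not> E x x) \<and> (\<forall>x y. E x y \<longrightarrow> x \<in> V \<and> y \<in> V)"

definition independent_set :: "'a set \<Rightarrow> ('a \<Rightarrow> 'a \<Rightarrow> bool) \<Rightarrow> 'a set \<Rightarrow> bool" where
  "independent_set V E S \<longleftrightarrow> S \<subseteq> V \<and> (\<forall>x\<in>S. \<forall>y\<in>S. \<not> E x y)"

definition indep_count :: "'a set \<Rightarrow> ('a \<Rightarrow> 'a \<Rightarrow> bool) \<Rightarrow> nat \<Rightarrow> nat" where
  "indep_count V E k = card {S. independent_set V E S \<and> card S = k}"

definition indep_number :: "'a set \<Rightarrow> ('a \<Rightarrow> 'a \<Rightarrow> bool) \<Rightarrow> nat" where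
  "indep_number V E = Max {card S | S. independent_set V E S}"

definition indep_poly :: "'a set \<Rightarrow> ('a \<Rightarrow> 'a \<Rightarrow> bool) \<Rightarrow> complex poly" where
  "indep_poly V E = (\<Sum>k\<le>indep_number V E. monom (of_nat (indep_count V E k)) k)"

definition stable_graph :: "'a set \<Rightarrow> ('a \<Rightarrow> 'a \<Rightarrow> bool) \<Rightarrow> bool" where
  "stable_graph V E \<longleftrightarrow> (\<forall>z. poly (indep_poly V E) z = 0 \<longrightarrow> Re z \<le> 0)"

definition Kbip_V :: "nat \<Rightarrow> nat \<Rightarrow> (nat + nat) set" where
  "Kbip_V m n = Inl ` {..<m} \<union> Inr ` {..<n}"

definition Kbip_E :: "nat \<Rightarrow> nat \<Rightarrow> (nat + nat) \<Rightarrow> (nat + nat) \<Rightarrow> bool" where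
  "Kbip_E m n x y \<longleftrightarrow> (\<exists>i j. i < m \<and> j < n \<and>
      ((x = Inl i \<and> y = Inr j) \<or> (x = Inr j \<and> y = Inl i)))"

end

theory Submission
  imports Defs
begin

text \<open>Independent sets of K_{m,n} lie in one side, so i(K_{m,n}, z) = (1 + z)^m + (1 + z)^n - 1,
and a root z with Re z > 0 yields w = 1 + z with Re w > 1 (hence |w| > 1) and w^m + w^n = 1.
Comparing moduli rules this out: if |m - n| <= 1, then w^m + w^n = w^a (1 + w^k) with k <= 1 has
modulus greater than 1; if n = 1, then |w|^m = |1 - w| < |w|; otherwise |1 - w^m| < |w|^n, which
is a polynomial inequality in Re w and |w|^2 valid for m = 2, n >= 4 and for m = 3, n >= 5.
This last step is where m <= 3 is needed.\<close>

lemma poly_indep_poly: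
  assumes "finite V"
  shows "poly (indep_poly V E) z = (\<Sum>S | independent_set V E S. z ^ card S)"
proof -
  define I where "I = {S. independent_set V E S}"
  have "finite I"
    using assms unfolding I_def independent_set_def by (auto intro: finite_subset[of _ "Pow V"])
  have card_le: "card S \<le> indep_number V E" if "S \<in> I" for S
    unfolding indep_number_def using \<open>finite I\<close> that
    by (intro Max_ge) (auto simp: I_def)
  have "poly (indep_poly V E) z = (\<Sum>k\<le>indep_number V E. of_nat (indep_count V E k) * z ^ k)"
    by (simp add: indep_poly_def poly_sum poly_monom)
  also have "\<dots> = (\<Sum>k\<le>indep_number V E. \<Sum>S\<in>{S \<in> I. card S = k}. z ^ card S)"
    by (intro sum.cong) (simp_all add: indep_count_def I_def)
  also have "\<dots> = (\<Sum>S\<in>I. z ^ card S)"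
    using sum.group[OF \<open>finite I\<close> finite_atMost, where g = card and h = "\<lambda>S. z ^ card S"] card_le
    by auto
  finally show ?thesis
    by (simp add: I_def)
qed

lemma sum_Pow_power_card:
  fixes z :: "'a :: comm_semiring_1"
  assumes "finite A"
  shows "(\<Sum>S\<in>Pow A. z ^ card S) = (1 + z) ^ card A"
  using prod_add[OF assms, of "\<lambda>_. z" "\<lambda>_. 1"] by (simp add: add.commute)

lemma independent_sets_Kbip:
  "{S. independent_set (Kbip_V m n) (Kbip_E m n) S} = Pow (Inl ` {..<m}) \<union> Pow (Inr ` {..<n})"
  (is "?I = Pow ?L \<union> Pow ?R")
proof
  show "?I \<subseteq> Pow ?L \<union> Pow ?R"
  proof
    fix S
    assume "S \<in> ?I"
    then have "S \<subseteq> ?L \<union> ?R" and no_edge: "\<forall>x\<in>S. \<forall>y\<in>S. \<not> Kbip_E m n x y"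
      by (simp_all add: independent_set_def Kbip_V_def)
    show "S \<in> Pow ?L \<union> Pow ?R"
    proof (rule ccontr)
      assume "S \<notin> Pow ?L \<union> Pow ?R"
      with \<open>S \<subseteq> ?L \<union> ?R\<close> obtain i j where "Inl i \<in> S" "i < m" "Inr j \<in> S" "j < n"
        by blast
      with no_edge show False
        unfolding Kbip_E_def by blast
    qed
  qed
  show "Pow ?L \<union> Pow ?R \<subseteq> ?I"
    by (auto simp: independent_set_def Kbip_V_def Kbip_E_def)
qed

lemma poly_indep_poly_Kbip:
  "poly (indep_poly (Kbip_V m n) (Kbip_E m n)) z = (1 + z) ^ m + (1 + z) ^ n - 1"
proof -
  let ?L = "Inl ` {..<m} :: (nat + nat) set" and ?R = "Inr ` {..<n} :: (nat + nat) set"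
  have "Pow ?L \<inter> Pow ?R = {{}}"
    by auto
  moreover have "finite (Kbip_V m n)"
    by (simp add: Kbip_V_def)
  ultimately show ?thesis
    using sum.union_inter[of "Pow ?L" "Pow ?R" "\<lambda>S. z ^ card S"]
    by (simp add: poly_indep_poly independent_sets_Kbip sum_Pow_power_card card_image algebra_simps)
qed

lemma stable_graph_Kbip_iff:
  "stable_graph (Kbip_V m n) (Kbip_E m n) \<longleftrightarrow> (\<forall>w. w ^ m + w ^ n = 1 \<longrightarrow> Re w \<le> 1)"
proof -
  have shift: "(\<forall>z. P (1 + z)) \<longleftrightarrow> (\<forall>w. P w)" for P :: "complex \<Rightarrow> bool"
    by (metis add.commute diff_add_cancel)
  show ?thesis
    unfolding stable_graph_def poly_indep_poly_Kbip right_minus_eq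
    using shift[of "\<lambda>w. w ^ m + w ^ n = 1 \<longrightarrow> Re w \<le> 1"] by simp
qed

lemma power_add_power_neq_one_if_norm_less:
  fixes w :: "'a :: real_normed_field"
  assumes "1 \<le> norm w" and "norm (1 - w ^ m) < norm w ^ k" and "k \<le> n"
  shows "w ^ n + w ^ m \<noteq> 1"
proof
  assume "w ^ n + w ^ m = 1"
  then have "norm w ^ n = norm (1 - w ^ m)"
    by (metis add_diff_cancel_right' norm_power)
  also have "\<dots> < norm w ^ k"
    by (fact assms(2))
  also have "\<dots> \<le> norm w ^ n"
    using assms(3,1) by (rule power_increasing)
  finally show False
    by simp
qed

lemma power_add_power_neq_one_if_norm_one_add_gt:
  fixes w :: "'a :: real_normed_field"
  assumes "1 \<le> norm w" and "1 < norm (1 + w ^ k)"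
  shows "w ^ a + w ^ (a + k) \<noteq> 1"
proof -
  have "1 < norm (1 + w ^ k)"
    by (fact assms(2))
  also have "\<dots> \<le> norm w ^ a * norm (1 + w ^ k)"
    using assms(1) by (intro mult_le_cancel_right1[THEN iffD2]) (simp_all add: one_le_power)
  also have "\<dots> = norm (w ^ a * (1 + w ^ k))"
    by (simp add: norm_mult norm_power)
  also have "\<dots> = norm (w ^ a + w ^ (a + k))"
    by (simp add: power_add distrib_left)
  finally show ?thesis
    by auto
qed

lemma cmod_one_minus_squared: "cmod (1 - u) ^ 2 = 1 - 2 * Re u + cmod u ^ 2"
  unfolding cmod_power2 by (simp add: power2_eq_square algebra_simps)

lemma cmod_one_minus_less:
  assumes "1 / 2 < Re w"
  shows "cmod (1 - w) < cmod w"
proof -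
  have "cmod (1 - w) ^ 2 < cmod w ^ 2"
    using assms by (simp add: cmod_one_minus_squared)
  then show ?thesis
    by (simp add: power_less_imp_less_base)
qed

lemma cmod_one_minus_power2_less:
  assumes "1 < Re w"
  shows "cmod (1 - w ^ 2) < cmod w ^ 4"
proof -
  define x s where "x = Re w" and "s = cmod w ^ 2"
  have "x\<^sup>2 \<le> s"
    unfolding x_def s_def cmod_power2 by simp
  have "1 < x\<^sup>2"
    using assms x_def by (simp add: one_less_power)
  have "Re (w ^ 2) = 2 * x\<^sup>2 - s"
    unfolding x_def s_def cmod_power2 Re_power2 by simp
  then have "cmod (1 - w ^ 2) ^ 2 = s\<^sup>2 + 2 * s + 1 - 4 * x\<^sup>2"
    by (simp add: cmod_one_minus_squared norm_power s_def flip: power_mult)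
  also have "\<dots> < s\<^sup>2 + 2 * s - 3"
    using \<open>1 < x\<^sup>2\<close> by simp
  also have "\<dots> \<le> s ^ 4"
  proof -
    have "2 \<le> s ^ 3 + s\<^sup>2"
      using \<open>1 < x\<^sup>2\<close> \<open>x\<^sup>2 \<le> s\<close> by (smt (verit) one_le_power)
    then have "0 \<le> (s - 1) * (s ^ 3 + s\<^sup>2 - 2)"
      using \<open>1 < x\<^sup>2\<close> \<open>x\<^sup>2 \<le> s\<close> by simp
    then show ?thesis
      by (simp add: algebra_simps power2_eq_square power3_eq_cube numeral_eq_Suc)
  qed
  also have "\<dots> = (cmod w ^ 4) ^ 2"
    by (simp add: s_def flip: power_mult)
  finally show ?thesis
    by (rule power_less_imp_less_base) simp
qed

lemma cmod_one_minus_power3_less: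
  assumes "1 < Re w"
  shows "cmod (1 - w ^ 3) < cmod w ^ 5"
proof -
  define x s where "x = Re w" and "s = cmod w ^ 2"
  have "1 < x"
    using assms x_def by simp
  have "x\<^sup>2 \<le> s"
    unfolding x_def s_def cmod_power2 by simp
  have "1 < x\<^sup>2"
    using \<open>1 < x\<close> by (simp add: one_less_power)
  then have "1 < s"
    using \<open>x\<^sup>2 \<le> s\<close> by linarith
  have "Re (w ^ 3) = 4 * x ^ 3 - 3 * x * s"
    unfolding x_def s_def cmod_power2 by (simp add: power2_eq_square power3_eq_cube algebra_simps)
  then have "cmod (1 - w ^ 3) ^ 2 = s ^ 3 + 1 + (6 * x * s - 8 * x ^ 3)"
    by (simp add: cmod_one_minus_squared norm_power s_def flip: power_mult)
  also have "\<dots> < s ^ 5"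
  proof (cases "s \<le> 4")
    case True
    \<comment> \<open>then \<open>x \<mapsto> 6 x s - 8 x\<^sup>3\<close> is decreasing for \<open>x \<ge> 1\<close>\<close>
    have "6 * s < 8 * (x\<^sup>2 + x + 1)"
      using True \<open>1 < x\<close> \<open>1 < x\<^sup>2\<close> unfolding distrib_left by linarith
    then have "(x - 1) * (6 * s - 8 * (x\<^sup>2 + x + 1)) \<le> 0"
      using \<open>1 < x\<close> by (simp add: mult_nonneg_nonpos)
    then have "6 * x * s - 8 * x ^ 3 \<le> 6 * s - 8"
      by (simp add: algebra_simps power2_eq_square power3_eq_cube)
    moreover have "s ^ 3 + 6 * s - 7 < s ^ 5"
    proof -
      define t where "t = s - 1"
      have "0 < 7 * (t - 2/7)\<^sup>2 + 3/7"
        by (simp add: add_nonneg_pos)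
      moreover have "0 \<le> 9 * t ^ 3 + 5 * t ^ 4 + t ^ 5"
        using \<open>1 < s\<close> t_def by simp
      ultimately have "0 < 1 - 4 * t + 7 * t\<^sup>2 + 9 * t ^ 3 + 5 * t ^ 4 + t ^ 5"
        by (simp add: power2_eq_square algebra_simps)
      then show ?thesis
        unfolding t_def by (simp add: algebra_simps power2_eq_square power3_eq_cube numeral_eq_Suc)
    qed
    ultimately show ?thesis
      by linarith
  next
    case False
    have "x \<le> s"
      using \<open>1 < x\<close> \<open>x\<^sup>2 \<le> s\<close> by (smt (verit) power2_eq_square mult_le_cancel_left1)
    then have "x * s \<le> s\<^sup>2"
      using \<open>1 < s\<close> by (simp add: power2_eq_square)
    moreover have "0 < x ^ 3"
      using \<open>1 < x\<close> by simp
    ultimately have "6 * x * s - 8 * x ^ 3 < 6 * s\<^sup>2"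
      unfolding mult.assoc by linarith
    moreover have "16 \<le> s\<^sup>2"
      using False power_mono[of 4 s 2] by simp
    moreover have "16 * s ^ 3 \<le> s ^ 5"
      using mult_right_mono[OF \<open>16 \<le> s\<^sup>2\<close>, of "s ^ 3"] \<open>1 < s\<close> by simp
    moreover have "4 * s\<^sup>2 \<le> s ^ 3"
      using mult_right_mono[of 4 s "s\<^sup>2"] False by (simp add: power2_eq_square power3_eq_cube)
    ultimately show ?thesis
      by linarith
  qed
  also have "\<dots> = (cmod w ^ 5) ^ 2"
    by (simp add: s_def flip: power_mult)
  finally show ?thesis
    by (rule power_less_imp_less_base) simp
qed

lemma power_add_power_neq_one_if_exponents_close:
  assumes "1 < Re w" and "a \<le> b + 1" and "b \<le> a + 1"
  shows "w ^ a + w ^ b \<noteq> 1"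
proof -
  have "1 \<le> cmod w"
    using assms(1) abs_Re_le_cmod[of w] by linarith
  have gap: "w ^ c + w ^ (c + k) \<noteq> 1" if "k \<le> 1" for c k
  proof (rule power_add_power_neq_one_if_norm_one_add_gt[OF \<open>1 \<le> cmod w\<close>])
    have "1 < cmod (1 + w)"
      using assms(1) abs_Re_le_cmod[of "1 + w"] by simp
    then show "1 < cmod (1 + w ^ k)"
      using that by (cases k) auto
  qed
  consider "b = a + (b - a)" "b - a \<le> 1" | "a = b + (a - b)" "a - b \<le> 1"
    using assms(2,3) by linarith
  then show ?thesis
    using gap[of "b - a" a] gap[of "a - b" b] by cases (metis add.commute)+
qed

lemma power2_add_power_neq_one:
  assumes "1 < Re w" and "1 \<le> n"
  shows "w ^ 2 + w ^ n \<noteq> 1"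
proof (cases "n \<le> 3")
  case True
  then show ?thesis
    using power_add_power_neq_one_if_exponents_close assms by simp
next
  case False
  have "1 \<le> cmod w"
    using assms(1) abs_Re_le_cmod[of w] by linarith
  from power_add_power_neq_one_if_norm_less[OF this cmod_one_minus_power2_less[OF assms(1)]] False
  show ?thesis
    by (simp add: add.commute)
qed

lemma power3_add_power_neq_one:
  assumes "1 < Re w" and "1 \<le> n"
  shows "w ^ 3 + w ^ n \<noteq> 1"
proof -
  have "1 \<le> cmod w"
    using assms(1) abs_Re_le_cmod[of w] by linarith
  consider "n = 1" | "2 \<le> n" "n \<le> 4" | "5 \<le> n"
    using assms(2) by linarith
  then show ?thesis
  proof cases
    case 1
    have "cmod (1 - w ^ 1) < cmod w ^ 1"
      using assms(1) cmod_one_minus_less by simp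
    from power_add_power_neq_one_if_norm_less[OF \<open>1 \<le> cmod w\<close> this, of 3] 1
    show ?thesis
      by simp
  next
    case 2
    then show ?thesis
      using power_add_power_neq_one_if_exponents_close assms by simp
  next
    case 3
    from power_add_power_neq_one_if_norm_less[OF \<open>1 \<le> cmod w\<close> cmod_one_minus_power3_less[OF assms(1)]] 3
    show ?thesis
      by (simp add: add.commute)
  qed
qed

theorem theorem2:
  fixes n :: nat
  assumes "n \<ge> 1"
  shows "stable_graph (Kbip_V 2 n) (Kbip_E 2 n) \<and> stable_graph (Kbip_V 3 n) (Kbip_E 3 n)"
proof -
  have "Re w \<le> 1" if "w ^ m + w ^ n = 1" and "m = 2 \<or> m = 3" for w :: complex and m :: nat
  proof (rule ccontr)
    assume "\<not> Re w \<le> 1"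
    then show False
      using that power2_add_power_neq_one[of w n] power3_add_power_neq_one[of w n] assms by auto
  qed
  then show ?thesis
    unfolding stable_graph_Kbip_iff by blast
qed

end
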